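(* Let $\mathcal{H}$ be a finite-dimensional Hilbert space, let $\mathcal{B}_0$ be a fixed reference observable (Hermitian operator) on $\mathcal{H}$, and let $\mathcal{A}_0$ be an observable on $\mathcal{H}$ that evolves in the Heisenberg picture according to $\frac{d\mathcal{A}_t}{dt}=\mathcal{L}_t^{\dagger}(\mathcal{A}_t)$, where $\mathcal{L}_t^{\dagger}$ is the adjoint of the Liouvillian super-operator, with $\mathcal{A}_t$ differentiable in $t$. Then for every $T>0$, $$T\ \geq\ T_Q=\frac{\sqrt{Q(\mathcal{B}_0,\mathcal{A}_0)}-\sqrt{Q(\mathcal{B}_0,\mathcal{A}_T)}}{2\,\langle\!\langle \lVert[\mathcal{B}_0,\mathcal{L}_t^{\dagger}(\mathcal{A}_t)]\rVert_{\rm HS}\rangle\!\rangle_T}$$ (whenever the time average in the denominator is nonzero).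
   Context: For operators $X,Y$ on $\mathcal{H}$, the quantumness is $Q(X,Y)=2\lVert[X,Y]\rVert_{\rm HS}^2$, where $[X,Y]=XY-YX$ and $\lVert O\rVert_{\rm HS}=\sqrt{\operatorname{tr}(O^{\dagger}O)}$ is the Hilbert–Schmidt norm. The Liouvillian $\mathcal{L}_t$ generates the Schrödinger-picture dynamics $\dot\rho_t=\mathcal{L}_t(\rho_t)$, and its adjoint $\mathcal{L}_t^\dagger$ is defined by $\operatorname{tr}(\mathcal{A}\,\mathcal{L}_t(\rho))=\operatorname{tr}(\mathcal{L}_t^\dagger(\mathcal{A})\rho)$. For a function $X_t$, $\langle\!\langle X_t\rangle\!\rangle_T=\frac{1}{T}\int_0^T X_t\,dt$. *)

theory Defs
  imports "HOL-Analysis.Analysis"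
begin

type_synonym 'n op = "complex^'n^'n"

definition adj :: "'n::finite op \<Rightarrow> 'n op" where
  "adj X = (\<chi> i j. cnj (X $ j $ i))"

definition hermitian :: "'n::finite op \<Rightarrow> bool" where
  "hermitian X \<longleftrightarrow> adj X = X"

definition commutator :: "'n::finite op \<Rightarrow> 'n op \<Rightarrow> 'n op" where
  "commutator X Y = X ** Y - Y ** X"

text \<open>Hilbert-Schmidt norm sqrt(tr(O^dagger O)); the trace is real and nonnegative.\<close>
definition hs_norm :: "'n::finite op \<Rightarrow> real" where
  "hs_norm M = sqrt (Re (trace (adj M ** M)))"

definition quantumness :: "'n::finite op \<Rightarrow> 'n op \<Rightarrow> real" where
  "quantumness X Y = 2 * (hs_norm (commutator X Y))\<^sup>2"

definition time_avg :: "(real \<Rightarrow> real) \<Rightarrow> real \<Rightarrow> real" where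
  "time_avg X T = (1 / T) * integral {0..T} X"

end

theory Submission
  imports Defs
begin

text \<open>The commutator with a fixed B0 is linear, so C t = [B0, A t] is differentiable with
  derivative [B0, Ldag t (A t)] and C T - C 0 is the integral of that derivative. The reverse
  triangle inequality then bounds the decrease of the Hilbert-Schmidt norm of C, which is
  sqrt(Q/2), by the time integral of the norm of [B0, Ldag t (A t)].\<close>

lemma matrix_add_rdistrib: "((A::'a::semiring_1^'n^'m) + B) ** C = A ** C + B ** C"
  by (simp add: vec_eq_iff matrix_matrix_mult_def sum.distrib distrib_right)

lemma matrix_mult_scaleR_left: "(r *\<^sub>R (A::'a::real_algebra_1^'n^'m)) ** B = r *\<^sub>R (A ** B)"
  by (simp add: vec_eq_iff matrix_matrix_mult_def scaleR_sum_right)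

lemma matrix_mult_scaleR_right: "(A::'a::real_algebra_1^'n^'m) ** (r *\<^sub>R B) = r *\<^sub>R (A ** B)"
  by (simp add: vec_eq_iff matrix_matrix_mult_def scaleR_sum_right)

lemma linear_commutator: "linear (commutator (B::'n::finite op))"
proof
  fix X Y :: "'n op" and r :: real
  show "commutator B (X + Y) = commutator B X + commutator B Y"
    by (simp add: commutator_def matrix_add_ldistrib matrix_add_rdistrib)
  show "commutator B (r *\<^sub>R X) = r *\<^sub>R commutator B X"
    by (simp add: commutator_def matrix_mult_scaleR_left matrix_mult_scaleR_right scaleR_diff_right)
qed

lemma bounded_linear_commutator: "bounded_linear (commutator B)"
  using linear_commutator linear_conv_bounded_linear by blast

lemma has_vector_derivative_commutator:
  "(A has_vector_derivative A') F \<Longrightarrow>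
    ((\<lambda>t. commutator B (A t)) has_vector_derivative commutator B A') F"
  by (rule bounded_linear.has_vector_derivative[OF bounded_linear_commutator])

lemma hs_norm_eq_norm: "hs_norm M = norm M"
proof -
  have "Re (trace (adj M ** M)) = (\<Sum>i\<in>UNIV. \<Sum>k\<in>UNIV. Re (M$k$i * cnj (M$k$i)))"
    by (simp add: trace_def adj_def matrix_matrix_mult_def mult.commute)
  also have "\<dots> = (\<Sum>k\<in>UNIV. \<Sum>i\<in>UNIV. (cmod (M$k$i))\<^sup>2)"
    by (subst sum.swap) (simp add: complex_mult_cnj cmod_def)
  also have "\<dots> = (norm M)\<^sup>2"
    by (simp add: norm_vec_def L2_set_def sum_nonneg)
  finally show ?thesis
    by (simp add: hs_norm_def)
qed

lemma sqrt_quantumness: "sqrt (quantumness X Y) = sqrt 2 * norm (commutator X Y)"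
  by (simp add: quantumness_def hs_norm_eq_norm real_sqrt_mult)

lemma norm_diff_le_integral_norm_derivative:
  fixes f :: "real \<Rightarrow> 'a::banach"
  assumes "a \<le> b"
    and "\<And>t. t \<in> {a..b} \<Longrightarrow> (f has_vector_derivative f' t) (at t within {a..b})"
    and "(\<lambda>t. norm (f' t)) integrable_on {a..b}"
  shows "norm (f b - f a) \<le> integral {a..b} (\<lambda>t. norm (f' t))"
proof -
  have "(f' has_integral (f b - f a)) {a..b}"
    using fundamental_theorem_of_calculus assms(1,2) by blast
  then have "norm (f b - f a) = norm (integral {a..b} f')" and "f' integrable_on {a..b}"
    by (auto simp: has_integral_iff)
  then show ?thesis
    using integral_norm_bound_integral[of f' "{a..b}" "\<lambda>t. norm (f' t)"] assms(3) by simp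
qed

theorem corollary1:
  fixes L Ldag :: "real \<Rightarrow> 'n::finite op \<Rightarrow> 'n op"
    and A :: "real \<Rightarrow> 'n op" and B0 :: "'n op" and T :: real
  assumes adjoint: "\<And>t X \<rho>. trace (X ** L t \<rho>) = trace (Ldag t X ** \<rho>)"
    and herm_B: "hermitian B0"
    and herm_A: "hermitian (A 0)"
    and heis: "\<And>t. t \<in> {0..T} \<Longrightarrow> (A has_vector_derivative Ldag t (A t)) (at t within {0..T})"
    and T_pos: "T > 0"
    and avg_nz: "time_avg (\<lambda>t. hs_norm (commutator B0 (Ldag t (A t)))) T \<noteq> 0"
  shows "T \<ge> (sqrt (quantumness B0 (A 0)) - sqrt (quantumness B0 (A T)))
              / (2 * time_avg (\<lambda>t. hs_norm (commutator B0 (Ldag t (A t)))) T)"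
proof -
  let ?C = "\<lambda>t. commutator B0 (A t)"
  define I where "I = integral {0..T} (\<lambda>t. norm (commutator B0 (Ldag t (A t))))"
  have "I \<noteq> 0"
    using avg_nz by (simp add: time_avg_def hs_norm_eq_norm I_def)
  \<comment> \<open>Non-integrable functions have integral 0, so I \<noteq> 0 yields the integrability of the
    norm, which does not follow from that of the derivative in the Henstock-Kurzweil setting.\<close>
  then have integrable: "(\<lambda>t. norm (commutator B0 (Ldag t (A t)))) integrable_on {0..T}"
    unfolding I_def using not_integrable_integral by blast
  then have "I > 0"
    using \<open>I \<noteq> 0\<close> integral_nonneg[of _ "{0..T}"] by (force simp: I_def)
  have "norm (?C T - ?C 0) \<le> I"
    unfolding I_def using T_pos integrable
    by (intro norm_diff_le_integral_norm_derivative has_vector_derivative_commutator heis) auto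
  then have "sqrt (quantumness B0 (A 0)) - sqrt (quantumness B0 (A T)) \<le> sqrt 2 * I"
    using norm_triangle_ineq3[of "?C T" "?C 0"]
    by (simp add: sqrt_quantumness norm_minus_commute flip: right_diff_distrib)
  also have "\<dots> \<le> 2 * I"
    using \<open>I > 0\<close> real_sqrt_le_mono[of 2 4] by simp
  finally show ?thesis
    using T_pos \<open>I > 0\<close> by (simp add: time_avg_def hs_norm_eq_norm pos_divide_le_eq flip: I_def)
qed

end
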